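(* Let $n_0$ be a positive integer and let $X$ be a unital prime Banach algebra over $\mathbb{C}$ containing a nontrivial idempotent element. Let $h:X\to X$ be an odd mapping such that $$\|h(xyx)-h(x)yx-xh(y)x-xyh(x)\|\le\theta(\|x\|^p+\|y\|^q),$$ $$\|h(\mu(x+my))+h(\mu(x-my))-\mu(2h(x)-2m^2h(y)+m^2h(2y))\|\le\theta(\|x\|^p+\|y\|^q)$$ for all $x,y\in X$ and all $\mu\in\mathbb{T}^1_{n_0}$, for some constants $\theta,p,q,m$, where $m$ is a nonzero even integer and $p<1$, $q<1$. Then $h$ is a linear derivation.
   Context: $\mathbb{T}^1_{n_0}:=\{e^{i\theta}: 0\le\theta\le 2\pi/n_0\}$. An algebra $X$ is prime if it is nontrivial and for any $a,b\in X$, $arb=0$ for all $r\in X$ implies $a=0$ or $b=0$. A nontrivial idempotent is an element $e$ with $e^2=e$, $e\neq0$, $e\neq\mathbf{1}$. A linear derivation is a $\mathbb{C}$-linear map $D:X\to X$ with $D(xy)=D(x)y+xD(y)$ for all $x,y\in X$. *)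

theory Defs
  imports "HOL-Analysis.Analysis"
begin

text \<open>Unital Banach algebras over the complex numbers: a real unital Banach algebra
  together with a compatible complex scalar multiplication (the library only provides
  real scalars for abstract normed algebras).\<close>
class complex_banach_algebra_1 = real_normed_algebra_1 + banach +
  fixes scaleC :: "complex \<Rightarrow> 'a \<Rightarrow> 'a"
  assumes scaleC_add_right: "scaleC c (x + y) = scaleC c x + scaleC c y"
    and scaleC_add_left: "scaleC (c + d) x = scaleC c x + scaleC d x"
    and scaleC_scaleC: "scaleC c (scaleC d x) = scaleC (c * d) x"
    and scaleC_one: "scaleC 1 x = x"
    and scaleC_of_real: "scaleC (complex_of_real r) x = scaleR r x"
    and norm_scaleC: "norm (scaleC c x) = cmod c * norm x"
    and mult_scaleC_left: "scaleC c x * y = scaleC c (x * y)"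
    and mult_scaleC_right: "x * scaleC c y = scaleC c (x * y)"

definition prime_algebra :: "'a::ring_1 itself \<Rightarrow> bool" where
  "prime_algebra _ \<longleftrightarrow> (1::'a) \<noteq> 0 \<and>
     (\<forall>a b::'a. (\<forall>r. a * r * b = 0) \<longrightarrow> a = 0 \<or> b = 0)"

definition nontrivial_idempotent :: "'a::ring_1 \<Rightarrow> bool" where
  "nontrivial_idempotent e \<longleftrightarrow> e * e = e \<and> e \<noteq> 0 \<and> e \<noteq> 1"

definition circle_arc :: "nat \<Rightarrow> complex set" where
  "circle_arc n0 = {exp (\<i> * complex_of_real t) | t. 0 \<le> t \<and> t \<le> 2 * pi / real n0}"

definition linear_derivation :: "('a::complex_banach_algebra_1 \<Rightarrow> 'a) \<Rightarrow> bool" where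
  "linear_derivation D \<longleftrightarrow>
     (\<forall>x y. D (x + y) = D x + D y) \<and>
     (\<forall>c x. D (scaleC c x) = scaleC c (D x)) \<and>
     (\<forall>x y. D (x * y) = D x * y + x * D y)"

end

theory Submission
  imports Defs
begin

text \<open>Putting \<open>x = 0\<close>, \<open>\<mu> = 1\<close> in the second inequality bounds \<open>\<parallel>h (2y) - 2 h y\<parallel>\<close> by a
  multiple of \<open>\<parallel>y\<parallel>\<^sup>q\<close>, so Hyers' sequence \<open>2\<^sup>-\<^sup>n h (2\<^sup>n z)\<close> converges to some \<open>D\<close>.
  Rescaling the first inequality by \<open>2\<^sup>n\<close> in both variables shows that \<open>D\<close> satisfies the
  Jordan triple identity exactly; rescaling only \<open>x\<close> and comparing at \<open>x = 1\<close> shows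
  \<open>D = h\<close>. So \<open>h\<close> commutes with doubling, and since \<open>p, q < 1\<close> the second inequality,
  rescaled, collapses to the exact equations \<open>h (x + m y) + h (x - m y) = 2 h x\<close> (additivity)
  and \<open>h (\<mu> x) = \<mu> h x\<close> on the arc; powers of the arc cover the unit circle and
  \<open>2 cos t = e\<^sup>i\<^sup>t + e\<^sup>-\<^sup>i\<^sup>t\<close> gives real, hence complex, homogeneity. Finally, by Bresar's
  theorem an additive Jordan triple derivation of a prime algebra without 2-torsion is a
  derivation.\<close>

section \<open>Jordan triple derivations of prime algebras\<close>

lemma real_vector_double_zero: "(x::'a::real_vector) + x = 0 \<longleftrightarrow> x = 0"
  by (metis scaleR_2 scaleR_eq_0_iff zero_neq_numeral)

lemma prime_algebraD:
  fixes a b :: "'a::ring_1"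
  assumes "prime_algebra TYPE('a)" "\<And>r. a * r * b = 0"
  shows "a = 0 \<or> b = 0"
  using assms unfolding prime_algebra_def by blast

lemma prime_algebra_sandwich_sum_zero:
  fixes c d :: "'a::real_algebra_1"
  assumes prime: "prime_algebra TYPE('a)"
    and sum_zero: "\<And>r. d * r * c + c * r * d = 0"
  shows "d * r * c = 0"
proof -
  have swap: "c * r * d = - (d * r * c)" for r
    using sum_zero[of r] by (simp add: add_eq_0_iff2 add.commute)
  have "d * x * c * z * c = 0" for x z
  proof -
    have "c * (x * c * z) * d = c * x * (c * z * d)" by (simp add: mult.assoc)
    also have "\<dots> = c * x * (- (d * z * c))" by (simp only: swap)
    also have "\<dots> = - (c * x * d * z * c)" by (simp add: mult.assoc)
    also have "\<dots> = d * x * c * z * c" by (simp add: swap)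
    finally have "d * x * c * z * c + d * x * c * z * c = 0"
      using sum_zero[of "x * c * z"] by (simp add: mult.assoc)
    then show ?thesis by (simp only: real_vector_double_zero)
  qed
  then have "d * r * c = 0 \<or> c = 0" using prime_algebraD[OF prime] by blast
  then show ?thesis by auto
qed

lemma prime_algebra_linearization:
  fixes a b c d :: "'a::ring_1"
  assumes prime: "prime_algebra TYPE('a)"
    and sum_zero: "\<And>r. a * r * b + c * r * d = 0"
    and vanish: "\<And>r. a * r * d = 0"
  shows "a * r * b = 0"
proof -
  let ?u = "a * r * b"
  have "?u * s * ?u = 0" for s
  proof -
    have "?u = - (c * r * d)"
      using sum_zero[of r] by (simp add: eq_neg_iff_add_eq_0)
    then have "?u * s * ?u = ?u * s * (- (c * r * d))" by simp
    also have "\<dots> = - (a * (r * b * s * c * r) * d)" by (simp add: mult.assoc)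
    finally show ?thesis by (simp add: vanish)
  qed
  then show ?thesis using prime_algebraD[OF prime] by blast
qed

definition derivation_defect :: "('a::ring \<Rightarrow> 'a) \<Rightarrow> 'a \<Rightarrow> 'a \<Rightarrow> 'a" where
  "derivation_defect D a b = D (a * b) - D a * b - a * D b"

locale jordan_triple_derivation = additive D
  for D :: "'a::real_algebra_1 \<Rightarrow> 'a" +
  assumes triple: "D (x * y * x) = D x * y * x + x * D y * x + x * y * D x"
begin

lemma one: "D 1 = 0"
  using triple[of 1 1] by (simp add: real_vector_double_zero)

lemma triple_sym:
  "D (a * b * c + c * b * a) = D a * b * c + a * D b * c + a * b * D c + D c * b * a + c * D b * a + c * b * D a"
proof -
  have "(a + c) * b * (a + c) = a * b * a + c * b * c + (a * b * c + c * b * a)"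
    by (simp add: algebra_simps)
  then have "D ((a + c) * b * (a + c)) = D (a * b * a) + D (c * b * c) + D (a * b * c + c * b * a)"
    by (simp only: add)
  then show ?thesis using triple[of "a + c" b] triple[of a b] triple[of c b]
    by (simp add: algebra_simps add)
qed

lemma jordan: "D (a * b + b * a) = D a * b + a * D b + D b * a + b * D a"
  using triple_sym[of a b 1] by (simp add: one)

lemma defect_antisym: "derivation_defect D b a = - derivation_defect D a b"
  using jordan[of a b] unfolding derivation_defect_def by (simp add: algebra_simps add)

lemma defect_add_left: "derivation_defect D (a + c) b = derivation_defect D a b + derivation_defect D c b"
  unfolding derivation_defect_def by (simp add: algebra_simps add)

lemma defect_add_right: "derivation_defect D a (b + c) = derivation_defect D a b + derivation_defect D a c"
  unfolding derivation_defect_def by (simp add: algebra_simps add)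

text \<open>Expand \<open>D (a b r b a + b a r a b)\<close> once as a symmetric triple product and once as
  \<open>D (a (b r b) a) + D (b (a r a) b)\<close>.\<close>
lemma defect_commutator:
  "derivation_defect D a b * r * (b * a - a * b) + (b * a - a * b) * r * derivation_defect D a b = 0"
proof -
  have expand: "D (a * b * r * (b * a) + b * a * r * (a * b))
      = D (a * b) * r * (b * a) + a * b * D r * (b * a) + a * b * r * D (b * a)
      + D (b * a) * r * (a * b) + b * a * D r * (a * b) + b * a * r * D (a * b)"
    using triple_sym[of "a * b" r "b * a"] by simp
  have split: "D (a * b * r * (b * a) + b * a * r * (a * b)) = D (a * (b * r * b) * a) + D (b * (a * r * a) * b)"
    by (simp only: add mult.assoc)
  have outer_a: "D (a * (b * r * b) * a)
      = D a * (b * r * b) * a + a * (D b * r * b + b * D r * b + b * r * D b) * a + a * (b * r * b) * D a"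
    using triple[of a "b * r * b"] triple[of b r] by simp
  have outer_b: "D (b * (a * r * a) * b)
      = D b * (a * r * a) * b + b * (D a * r * a + a * D r * a + a * r * D a) * b + b * (a * r * a) * D b"
    using triple[of b "a * r * a"] triple[of a r] by simp
  have "derivation_defect D a b * r * (b * a) + a * b * r * derivation_defect D b a
      + derivation_defect D b a * r * (a * b) + b * a * r * derivation_defect D a b
    = (D (a * b) * r * (b * a) + a * b * D r * (b * a) + a * b * r * D (b * a)
      + D (b * a) * r * (a * b) + b * a * D r * (a * b) + b * a * r * D (a * b))
    - ((D a * (b * r * b) * a + a * (D b * r * b + b * D r * b + b * r * D b) * a + a * (b * r * b) * D a)
      + (D b * (a * r * a) * b + b * (D a * r * a + a * D r * a + a * r * D a) * b + b * (a * r * a) * D b))"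
    unfolding derivation_defect_def by (simp add: algebra_simps)
  also have "\<dots> = 0" using expand split outer_a outer_b by simp
  finally show ?thesis using defect_antisym[of a b] by (simp add: algebra_simps)
qed

lemma derivation_if_prime:
  assumes prime: "prime_algebra TYPE('a)"
  shows "D (x * y) = D x * y + x * D y"
proof -
  have comm_ab: "derivation_defect D a b * r * (b * a - a * b) = 0" for a b r
    using prime_algebra_sandwich_sum_zero[OF prime defect_commutator] .
  have comm_cb: "derivation_defect D a b * r * (b * c - c * b) = 0" for a b c r
  proof (rule prime_algebra_linearization[OF prime])
    show "derivation_defect D a b * r * (b * c - c * b) + derivation_defect D c b * r * (b * a - a * b) = 0" for r
      using comm_ab[of "a + c" b r] comm_ab[of a b r] comm_ab[of c b r]
      by (simp add: defect_add_left algebra_simps)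
  qed (rule comm_ab)
  have comm_any: "derivation_defect D a b * r * (e * c - c * e) = 0" for a b c e r
  proof (rule prime_algebra_linearization[OF prime])
    show "derivation_defect D a b * r * (e * c - c * e) + derivation_defect D a e * r * (b * c - c * b) = 0" for r
      using comm_cb[of a "b + e" r c] comm_cb[of a b r c] comm_cb[of a e r c]
      by (simp add: defect_add_right algebra_simps)
  qed (rule comm_cb)
  \<comment> \<open>A nonzero defect forces commutativity, where a Jordan derivation is a derivation.\<close>
  have "derivation_defect D x y = 0"
  proof (rule ccontr)
    assume nonzero: "derivation_defect D x y \<noteq> 0"
    have comm: "e * c = c * e" for e c :: 'a
      using prime_algebraD[OF prime, of "derivation_defect D x y" "e * c - c * e"] comm_any nonzero
      by auto
    have "D (x * y) + D (x * y) = (D x * y + x * D y) + (D x * y + x * D y)"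
      using jordan[of x y] comm[of x y] comm[of "D y" x] comm[of y "D x"] by (simp add: add algebra_simps)
    then have "derivation_defect D x y + derivation_defect D x y = 0"
      unfolding derivation_defect_def by (simp add: algebra_simps)
    with nonzero show False by (simp only: real_vector_double_zero)
  qed
  then show ?thesis unfolding derivation_defect_def by (simp add: algebra_simps)
qed

end

section \<open>Hyers sequences\<close>

lemma power_of_two_powr_divide: "((2::real) ^ n) powr c / (2 ^ n) ^ k = (2 powr (c - real k)) ^ n"
proof -
  have "((2::real) ^ n) ^ k = 2 powr (real n * real k)"
    by (metis of_nat_mult power_mult powr_realpow zero_less_numeral)
  moreover have "(2 powr (c - real k)) ^ n = (2::real) powr ((c - real k) * real n)"
    by (simp add: powr_realpow[symmetric] powr_powr)
  ultimately show ?thesis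
    by (simp add: powr_realpow[symmetric] powr_powr powr_diff[symmetric] algebra_simps)
qed

lemma dyadic_bound_tendsto_zero:
  assumes "a < real k" "b < real k"
  shows "(\<lambda>n. \<theta> * (((2::real) ^ n) powr a * A + ((2::real) ^ n) powr b * B) / (2 ^ n) ^ k) \<longlonglongrightarrow> 0"
proof -
  have "(\<lambda>n. \<theta> * ((2 powr (a - real k)) ^ n * A + (2 powr (b - real k)) ^ n * B)) \<longlonglongrightarrow> \<theta> * (0 * A + 0 * B)"
    using assms by (intro tendsto_intros LIMSEQ_power_zero) (simp_all add: powr_less_one)
  moreover have "\<theta> * (X * A + Y * B) / d = \<theta> * (X / d * A + Y / d * B)" for X Y d :: real
    by (simp add: algebra_simps add_divide_distrib)
  ultimately show ?thesis
    by (simp only: power_of_two_powr_divide[symmetric]) simp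
qed

lemma eq_0_if_dyadic_bound:
  fixes v :: "'a::real_normed_vector"
  assumes bound: "\<And>n. (2::real) ^ n * norm v \<le> \<theta> * (((2::real) ^ n) powr p * A + ((2::real) ^ n) powr q * B)"
    and "p < 1" "q < 1"
  shows "v = 0"
proof -
  have "\<forall>n. norm v \<le> \<theta> * (((2::real) ^ n) powr p * A + ((2::real) ^ n) powr q * B) / (2 ^ n) ^ 1"
    using bound by (simp add: pos_le_divide_eq mult.commute)
  then have "norm v \<le> 0"
    using assms(2,3) by (intro LIMSEQ_le_const[OF dyadic_bound_tendsto_zero[of p 1 q]]) auto
  then show ?thesis by simp
qed

definition dyadic_rescaling :: "('a::real_vector \<Rightarrow> 'b::real_vector) \<Rightarrow> nat \<Rightarrow> 'a \<Rightarrow> 'b" where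
  "dyadic_rescaling f n z = (1 / 2 ^ n) *\<^sub>R f ((2 ^ n) *\<^sub>R z)"

definition dyadic_limit :: "('a::real_vector \<Rightarrow> 'b::real_normed_vector) \<Rightarrow> 'a \<Rightarrow> 'b" where
  "dyadic_limit f z = lim (\<lambda>n. dyadic_rescaling f n z)"

lemma dyadic_rescaling_Suc_diff:
  fixes f :: "'a::real_normed_vector \<Rightarrow> 'b::real_normed_vector"
  assumes doubling: "\<And>y. norm (f (2 *\<^sub>R y) - 2 *\<^sub>R f y) \<le> \<theta> * norm y powr q"
  shows "norm (dyadic_rescaling f (Suc n) z - dyadic_rescaling f n z)
    \<le> \<theta> / 2 * norm z powr q * (2 powr (q - 1)) ^ n"
proof -
  let ?y = "(2 ^ n) *\<^sub>R z"
  have "dyadic_rescaling f (Suc n) z - dyadic_rescaling f n z = (1 / 2 ^ Suc n) *\<^sub>R (f (2 *\<^sub>R ?y) - 2 *\<^sub>R f ?y)"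
    unfolding dyadic_rescaling_def by (simp add: algebra_simps)
  then have "norm (dyadic_rescaling f (Suc n) z - dyadic_rescaling f n z) = norm (f (2 *\<^sub>R ?y) - 2 *\<^sub>R f ?y) / 2 ^ Suc n"
    by simp
  also have "\<dots> \<le> \<theta> * norm ?y powr q / 2 ^ Suc n"
    by (rule divide_right_mono[OF doubling]) simp
  also have "\<dots> = \<theta> / 2 * norm z powr q * (((2::real) ^ n) powr q / (2 ^ n) ^ 1)"
    by (simp add: powr_mult)
  finally show ?thesis unfolding power_of_two_powr_divide by simp
qed

lemma dyadic_rescaling_LIMSEQ:
  fixes f :: "'a::real_normed_vector \<Rightarrow> 'b::banach"
  assumes doubling: "\<And>y. norm (f (2 *\<^sub>R y) - 2 *\<^sub>R f y) \<le> \<theta> * norm y powr q"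
    and "q < 1"
  shows "(\<lambda>n. dyadic_rescaling f n z) \<longlonglongrightarrow> dyadic_limit f z"
proof -
  let ?g = "\<lambda>n. dyadic_rescaling f n z"
  have "summable (\<lambda>n. \<theta> / 2 * norm z powr q * (2 powr (q - 1)) ^ n)"
    using \<open>q < 1\<close> by (intro summable_mult summable_geometric) (simp add: powr_less_one)
  then have "summable (\<lambda>n. ?g (Suc n) - ?g n)"
    by (rule summable_comparison_test'[OF _ dyadic_rescaling_Suc_diff[OF doubling]])
  then have "(\<lambda>n. \<Sum>i<n. ?g (Suc i) - ?g i) \<longlonglongrightarrow> (\<Sum>n. ?g (Suc n) - ?g n)"
    by (rule summable_LIMSEQ)
  then have "(\<lambda>n. ?g n - ?g 0) \<longlonglongrightarrow> (\<Sum>n. ?g (Suc n) - ?g n)"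
    using sum_lessThan_telescope[of ?g] by simp
  then have "(\<lambda>n. (?g n - ?g 0) + ?g 0) \<longlonglongrightarrow> (\<Sum>n. ?g (Suc n) - ?g n) + ?g 0"
    by (intro tendsto_intros)
  then have "convergent ?g" unfolding convergent_def by auto
  then show ?thesis unfolding dyadic_limit_def by (simp add: convergent_LIMSEQ_iff)
qed

lemma dyadic_limit_scaleR_2:
  fixes f :: "'a::real_normed_vector \<Rightarrow> 'b::banach"
  assumes doubling: "\<And>y. norm (f (2 *\<^sub>R y) - 2 *\<^sub>R f y) \<le> \<theta> * norm y powr q" "q < 1"
  shows "dyadic_limit f (2 *\<^sub>R y) = 2 *\<^sub>R dyadic_limit f y"
proof -
  have "dyadic_rescaling f n (2 *\<^sub>R y) = 2 *\<^sub>R dyadic_rescaling f (Suc n) y" for n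
    unfolding dyadic_rescaling_def by (simp add: scaleR_scaleR mult.commute)
  moreover have "(\<lambda>n. 2 *\<^sub>R dyadic_rescaling f (Suc n) y) \<longlonglongrightarrow> 2 *\<^sub>R dyadic_limit f y"
    by (intro tendsto_intros LIMSEQ_Suc dyadic_rescaling_LIMSEQ[OF doubling])
  ultimately have "(\<lambda>n. dyadic_rescaling f n (2 *\<^sub>R y)) \<longlonglongrightarrow> 2 *\<^sub>R dyadic_limit f y"
    by simp
  then show ?thesis by (rule LIMSEQ_unique[OF dyadic_rescaling_LIMSEQ[OF doubling]])
qed

definition jordan_triple_defect :: "('a::ring \<Rightarrow> 'a) \<Rightarrow> 'a \<Rightarrow> 'a \<Rightarrow> 'a" where
  "jordan_triple_defect f x y = f (x * y * x) - f x * y * x - x * f y * x - x * y * f x"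

lemma jordan_triple_defect_dyadic:
  fixes f :: "'a::real_normed_algebra_1 \<Rightarrow> 'a"
  shows "(1 / (2 ^ n) ^ (j + 2)) *\<^sub>R jordan_triple_defect f ((2 ^ n) *\<^sub>R x) (((2 ^ n) ^ j) *\<^sub>R y)
    = dyadic_rescaling f ((j + 2) * n) (x * y * x) - dyadic_rescaling f n x * y * x
      - x * dyadic_rescaling f (j * n) y * x - x * y * dyadic_rescaling f n x"
proof -
  have "(2::real) ^ ((j + 2) * n) = (2 ^ n) ^ (j + 2)" "(2::real) ^ (j * n) = (2 ^ n) ^ j"
    by (simp_all only: power_mult[symmetric] mult.commute)
  then show ?thesis
    unfolding jordan_triple_defect_def dyadic_rescaling_def
    by (simp add: algebra_simps power_add power2_eq_square)
qed

lemma jordan_triple_defect_dyadic_tendsto_zero: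
  fixes f :: "'a::real_normed_algebra_1 \<Rightarrow> 'a"
  assumes bound: "\<And>x y. norm (jordan_triple_defect f x y) \<le> \<theta> * (norm x powr p + norm y powr q)"
    and "p < 1" "q < 1"
  shows "(\<lambda>n. dyadic_rescaling f ((j + 2) * n) (x * y * x) - dyadic_rescaling f n x * y * x
      - x * dyadic_rescaling f (j * n) y * x - x * y * dyadic_rescaling f n x) \<longlonglongrightarrow> 0"
proof (rule Lim_null_comparison)
  let ?B = "\<lambda>n. \<theta> * (((2::real) ^ n) powr p * norm x powr p + ((2::real) ^ n) powr (j * q) * norm y powr q)
    / (2 ^ n) ^ (j + 2)"
  show "?B \<longlonglongrightarrow> 0"
    using assms(2,3) mult_right_mono[of q 1 j]
    by (intro dyadic_bound_tendsto_zero) (auto simp: mult.commute)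
  show "\<forall>\<^sub>F n in sequentially. norm (dyadic_rescaling f ((j + 2) * n) (x * y * x) - dyadic_rescaling f n x * y * x
      - x * dyadic_rescaling f (j * n) y * x - x * y * dyadic_rescaling f n x) \<le> ?B n"
  proof (intro always_eventually allI)
    fix n
    have "(((2::real) ^ n) ^ j) powr q = ((2::real) ^ n) powr (j * q)"
      by (simp add: powr_realpow[symmetric] powr_powr mult.assoc)
    then show "norm (dyadic_rescaling f ((j + 2) * n) (x * y * x) - dyadic_rescaling f n x * y * x
      - x * dyadic_rescaling f (j * n) y * x - x * y * dyadic_rescaling f n x) \<le> ?B n"
      unfolding jordan_triple_defect_dyadic[symmetric]
      using divide_right_mono[OF bound[of "(2 ^ n) *\<^sub>R x" "((2 ^ n) ^ j) *\<^sub>R y"], of "(2 ^ n) ^ (j + 2)"]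
      by (simp add: powr_mult)
  qed
qed

lemma dyadic_rescaling_subseq_LIMSEQ:
  fixes f :: "'a::real_normed_vector \<Rightarrow> 'b::banach"
  assumes "\<And>y. norm (f (2 *\<^sub>R y) - 2 *\<^sub>R f y) \<le> \<theta> * norm y powr q" "q < 1" "j > 0"
  shows "(\<lambda>n. dyadic_rescaling f (j * n) z) \<longlonglongrightarrow> dyadic_limit f z"
proof -
  have "strict_mono (\<lambda>n. j * n)" using \<open>j > 0\<close> by (simp add: strict_mono_def)
  from LIMSEQ_subseq_LIMSEQ[OF dyadic_rescaling_LIMSEQ[OF assms(1,2)] this] show ?thesis
    by (simp add: o_def)
qed

lemma dyadic_limit_jordan_triple:
  fixes f :: "'a::{real_normed_algebra_1, banach} \<Rightarrow> 'a"
  assumes doubling: "\<And>y. norm (f (2 *\<^sub>R y) - 2 *\<^sub>R f y) \<le> \<theta>' * norm y powr q'" "q' < 1"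
    and bound: "\<And>x y. norm (jordan_triple_defect f x y) \<le> \<theta> * (norm x powr p + norm y powr q)"
    and "p < 1" "q < 1"
  shows "dyadic_limit f (x * y * x) = dyadic_limit f x * y * x + x * dyadic_limit f y * x + x * y * dyadic_limit f x"
proof -
  let ?D = "dyadic_limit f" and ?g = "dyadic_rescaling f"
  have "(\<lambda>n. ?g ((1 + 2) * n) (x * y * x) - ?g n x * y * x - x * ?g (1 * n) y * x - x * y * ?g n x)
      \<longlonglongrightarrow> ?D (x * y * x) - ?D x * y * x - x * ?D y * x - x * y * ?D x"
    by (intro tendsto_intros dyadic_rescaling_subseq_LIMSEQ[OF doubling] dyadic_rescaling_LIMSEQ[OF doubling])
      simp_all
  from LIMSEQ_unique[OF this jordan_triple_defect_dyadic_tendsto_zero[OF bound \<open>p < 1\<close> \<open>q < 1\<close>]]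
  show ?thesis by (simp add: algebra_simps)
qed

text \<open>With \<open>y\<close> kept fixed instead of rescaled, the same limit yields the triple identity with
  \<open>f y\<close> in the middle; at \<open>x = 1\<close> the two identities force the Hyers limit of \<open>f\<close> to be \<open>f\<close>.\<close>
lemma dyadic_limit_eq_self:
  fixes f :: "'a::{real_normed_algebra_1, banach} \<Rightarrow> 'a"
  assumes doubling: "\<And>y. norm (f (2 *\<^sub>R y) - 2 *\<^sub>R f y) \<le> \<theta>' * norm y powr q'" "q' < 1"
    and bound: "\<And>x y. norm (jordan_triple_defect f x y) \<le> \<theta> * (norm x powr p + norm y powr q)"
    and "p < 1" "q < 1"
  shows "dyadic_limit f y = f y"
proof -
  let ?D = "dyadic_limit f" and ?g = "dyadic_rescaling f"
  have "(\<lambda>n. ?g ((0 + 2) * n) (1 * y * 1) - ?g n 1 * y * 1 - 1 * ?g (0 * n) y * 1 - 1 * y * ?g n 1)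
      \<longlonglongrightarrow> ?D (1 * y * 1) - ?D 1 * y * 1 - 1 * f y * 1 - 1 * y * ?D 1"
    by (intro tendsto_intros dyadic_rescaling_subseq_LIMSEQ[OF doubling] dyadic_rescaling_LIMSEQ[OF doubling])
      (simp_all add: dyadic_rescaling_def)
  from LIMSEQ_unique[OF this jordan_triple_defect_dyadic_tendsto_zero[OF bound \<open>p < 1\<close> \<open>q < 1\<close>]]
  have "?D y = ?D 1 * y + f y + y * ?D 1" by (simp add: algebra_simps)
  moreover have "?D y = ?D 1 * y + ?D y + y * ?D 1"
    using dyadic_limit_jordan_triple[OF doubling bound \<open>p < 1\<close> \<open>q < 1\<close>, of 1 y] by simp
  ultimately show ?thesis by (metis add_left_imp_eq add.commute add.left_commute)
qed

section \<open>The additive-quadratic inequality\<close>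

lemma scaleR_power_of_two_if_doubling:
  fixes f :: "'a::real_vector \<Rightarrow> 'b::real_vector"
  assumes "\<And>y. f (2 *\<^sub>R y) = 2 *\<^sub>R f y"
  shows "f ((2 ^ n) *\<^sub>R z) = (2 ^ n) *\<^sub>R f z"
proof (induction n)
  case (Suc n)
  have "f ((2 ^ Suc n) *\<^sub>R z) = 2 *\<^sub>R f ((2 ^ n) *\<^sub>R z)"
    using assms[of "(2 ^ n) *\<^sub>R z"] by simp
  then show ?case by (simp add: Suc)
qed simp

lemma additive_if_approx_jensen:
  fixes f :: "'a::real_normed_vector \<Rightarrow> 'b::real_normed_vector"
  assumes doubling: "\<And>y. f (2 *\<^sub>R y) = 2 *\<^sub>R f y"
    and bound: "\<And>x y. norm (f (x + m *\<^sub>R y) + f (x - m *\<^sub>R y) - 2 *\<^sub>R f x)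
      \<le> \<theta> * (norm x powr p + norm y powr q)"
    and "m \<noteq> 0" "p < 1" "q < 1"
  shows "f (u + v) = f u + f v"
proof -
  have jensen: "f (x + m *\<^sub>R y) + f (x - m *\<^sub>R y) = 2 *\<^sub>R f x" for x y
  proof -
    let ?v = "f (x + m *\<^sub>R y) + f (x - m *\<^sub>R y) - 2 *\<^sub>R f x"
    have "?v = 0"
    proof (rule eq_0_if_dyadic_bound[OF _ \<open>p < 1\<close> \<open>q < 1\<close>])
      fix n
      have scaled: "(2 ^ n) *\<^sub>R x + m *\<^sub>R ((2 ^ n) *\<^sub>R y) = (2 ^ n) *\<^sub>R (x + m *\<^sub>R y)"
        "(2 ^ n) *\<^sub>R x - m *\<^sub>R ((2 ^ n) *\<^sub>R y) = (2 ^ n) *\<^sub>R (x - m *\<^sub>R y)"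
        by (simp_all add: algebra_simps)
      have rescaled: "(2 ^ n) *\<^sub>R ?v = f ((2 ^ n) *\<^sub>R x + m *\<^sub>R ((2 ^ n) *\<^sub>R y))
          + f ((2 ^ n) *\<^sub>R x - m *\<^sub>R ((2 ^ n) *\<^sub>R y)) - 2 *\<^sub>R f ((2 ^ n) *\<^sub>R x)"
        by (simp only: scaled scaleR_power_of_two_if_doubling[where f = f, OF doubling]) (simp add: algebra_simps)
      have "norm ((2 ^ n) *\<^sub>R ?v) \<le> \<theta> * (norm ((2 ^ n) *\<^sub>R x) powr p + norm ((2 ^ n) *\<^sub>R y) powr q)"
        unfolding rescaled by (rule bound)
      then show "2 ^ n * norm ?v \<le> \<theta> * (((2::real) ^ n) powr p * norm x powr p + ((2::real) ^ n) powr q * norm y powr q)"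
        by (simp add: powr_mult)
    qed
    then show ?thesis by simp
  qed
  let ?x = "(1 / 2) *\<^sub>R (u + v)" and ?y = "(1 / (2 * m)) *\<^sub>R (u - v)"
  have half: "m *\<^sub>R ?y = (1 / 2) *\<^sub>R (u - v)" using \<open>m \<noteq> 0\<close> by simp
  have "?x + m *\<^sub>R ?y = (1 / 2) *\<^sub>R ((u + v) + (u - v))" "?x - m *\<^sub>R ?y = (1 / 2) *\<^sub>R ((u + v) - (u - v))"
    unfolding half by (simp_all only: scaleR_add_right scaleR_diff_right)
  then have "?x + m *\<^sub>R ?y = u" "?x - m *\<^sub>R ?y = v"
    by (simp_all add: scaleR_2[symmetric])
  then have "f u + f v = 2 *\<^sub>R f ?x" using jensen[of ?x ?y] by simp
  also have "\<dots> = f (u + v)" using doubling[of ?x] by simp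
  finally show ?thesis ..
qed

lemma scaleC_zero_right: "scaleC c (0::'a::complex_banach_algebra_1) = 0"
  using scaleC_add_right[of c "0::'a" 0] by simp

lemma scaleC_minus_right: "scaleC c (- x::'a::complex_banach_algebra_1) = - scaleC c x"
  using scaleC_add_right[of c x "- x"] by (simp add: scaleC_zero_right minus_unique)

lemma scaleC_diff_right: "scaleC c (x - y::'a::complex_banach_algebra_1) = scaleC c x - scaleC c y"
  using scaleC_add_right[of c x "- y"] by (simp add: scaleC_minus_right)

lemma scaleC_scaleR_commute:
  fixes x :: "'a::complex_banach_algebra_1"
  shows "scaleC c (r *\<^sub>R x) = r *\<^sub>R scaleC c x"
  by (simp add: scaleC_of_real[symmetric] scaleC_scaleC mult.commute)

definition additive_quadratic_defect ::
    "('a::complex_banach_algebra_1 \<Rightarrow> 'a) \<Rightarrow> real \<Rightarrow> complex \<Rightarrow> 'a \<Rightarrow> 'a \<Rightarrow> 'a" where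
  "additive_quadratic_defect h m \<mu> x y = h (scaleC \<mu> (x + m *\<^sub>R y)) + h (scaleC \<mu> (x - m *\<^sub>R y))
     - scaleC \<mu> (2 *\<^sub>R h x - (2 * m ^ 2) *\<^sub>R h y + m ^ 2 *\<^sub>R h (2 *\<^sub>R y))"

lemma doubling_bound_if_additive_quadratic_bound:
  assumes odd: "\<And>x. h (- x) = - h x"
    and bound: "\<And>x y. norm (additive_quadratic_defect h m 1 x y) \<le> \<theta> * (norm x powr p + norm y powr q)"
    and "m \<noteq> 0"
  shows "norm (h (2 *\<^sub>R y) - 2 *\<^sub>R h y) \<le> \<theta> / m\<^sup>2 * norm y powr q"
proof -
  have "h 0 = 0" using odd[of 0] by (simp add: real_vector_double_zero eq_neg_iff_add_eq_0)
  then have "additive_quadratic_defect h m 1 0 y = - (m\<^sup>2 *\<^sub>R (h (2 *\<^sub>R y) - 2 *\<^sub>R h y))"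
    unfolding additive_quadratic_defect_def by (simp add: scaleC_one odd algebra_simps)
  then have "m\<^sup>2 * norm (h (2 *\<^sub>R y) - 2 *\<^sub>R h y) \<le> \<theta> * norm y powr q"
    using bound[of 0 y] by simp
  then show ?thesis using \<open>m \<noteq> 0\<close> by (simp add: field_simps)
qed

lemma additive_if_additive_quadratic_bound:
  assumes doubling: "\<And>y. h (2 *\<^sub>R y) = 2 *\<^sub>R h y"
    and bound: "\<And>x y. norm (additive_quadratic_defect h m 1 x y) \<le> \<theta> * (norm x powr p + norm y powr q)"
    and "m \<noteq> 0" "p < 1" "q < 1"
  shows "h (u + v) = h u + h v"
proof (rule additive_if_approx_jensen[where f = h, OF doubling _ assms(3-5)])
  fix x y
  have "additive_quadratic_defect h m 1 x y = h (x + m *\<^sub>R y) + h (x - m *\<^sub>R y) - 2 *\<^sub>R h x"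
    unfolding additive_quadratic_defect_def by (simp add: scaleC_one doubling algebra_simps)
  then show "norm (h (x + m *\<^sub>R y) + h (x - m *\<^sub>R y) - 2 *\<^sub>R h x) \<le> \<theta> * (norm x powr p + norm y powr q)"
    using bound[of x y] by simp
qed

lemma scaleC_commute_if_additive_quadratic_bound:
  assumes doubling: "\<And>y. h (2 *\<^sub>R y) = 2 *\<^sub>R h y"
    and bound: "\<And>x y. norm (additive_quadratic_defect h m \<mu> x y) \<le> \<theta> * (norm x powr p + norm y powr q)"
    and "p < 1"
  shows "h (scaleC \<mu> x) = scaleC \<mu> (h x)"
proof -
  let ?v = "2 *\<^sub>R (h (scaleC \<mu> x) - scaleC \<mu> (h x))"
  have h0: "h 0 = 0" using doubling[of 0] by (simp add: scaleR_2)
  have double_scaleR: "a *\<^sub>R w + a *\<^sub>R w = (2 * a) *\<^sub>R w" for a and w :: 'a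
    by (metis mult_2 scaleR_add_left)
  have "?v = 0"
  proof (rule eq_0_if_dyadic_bound[OF _ \<open>p < 1\<close> \<open>p < 1\<close>])
    fix n
    have "additive_quadratic_defect h m \<mu> ((2 ^ n) *\<^sub>R x) 0 = (2 ^ n) *\<^sub>R ?v"
      unfolding additive_quadratic_defect_def
      by (simp only: scaleR_zero_right add_0_right diff_zero h0 scaleC_scaleR_commute
          scaleR_power_of_two_if_doubling[where f = h, OF doubling])
        (simp add: scaleC_diff_right algebra_simps double_scaleR)
    then have "norm ((2 ^ n) *\<^sub>R ?v) \<le> \<theta> * (norm ((2 ^ n) *\<^sub>R x) powr p + norm (0::'a) powr q)"
      using bound[of "(2 ^ n) *\<^sub>R x" 0] by simp
    then show "2 ^ n * norm ?v \<le> \<theta> * (((2::real) ^ n) powr p * norm x powr p + ((2::real) ^ n) powr p * 0)"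
      by (simp add: powr_mult)
  qed
  then show ?thesis by simp
qed

section \<open>Complex homogeneity from the arc\<close>

lemma scaleC_power_commute:
  fixes f :: "'a::complex_banach_algebra_1 \<Rightarrow> 'b::complex_banach_algebra_1"
  assumes "\<And>x. f (scaleC \<mu> x) = scaleC \<mu> (f x)"
  shows "f (scaleC (\<mu> ^ k) x) = scaleC (\<mu> ^ k) (f x)"
proof (induction k arbitrary: x)
  case (Suc k)
  have "f (scaleC (\<mu> ^ Suc k) x) = f (scaleC \<mu> (scaleC (\<mu> ^ k) x))"
    by (simp add: scaleC_scaleC)
  also have "\<dots> = scaleC \<mu> (scaleC (\<mu> ^ k) (f x))"
    by (simp only: assms Suc)
  also have "\<dots> = scaleC (\<mu> ^ Suc k) (f x)"
    by (simp add: scaleC_scaleC)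
  finally show ?case .
qed (simp add: scaleC_one)

lemma cis_commute_if_circle_arc:
  fixes f :: "'a::complex_banach_algebra_1 \<Rightarrow> 'b::complex_banach_algebra_1"
  assumes "n0 > 0"
    and arc: "\<And>\<mu> x. \<mu> \<in> circle_arc n0 \<Longrightarrow> f (scaleC \<mu> x) = scaleC \<mu> (f x)"
  shows "f (scaleC (cis t) x) = scaleC (cis t) (f x)"
proof -
  have nonneg: "f (scaleC (cis s) x) = scaleC (cis s) (f x)" if "0 \<le> s" "s \<le> 2 * pi" for s
  proof -
    have "cis (s / n0) \<in> circle_arc n0"
      unfolding circle_arc_def cis_conv_exp using that \<open>n0 > 0\<close>
      by (auto intro!: exI[of _ "s / n0"] divide_right_mono)
    moreover have "cis (s / n0) ^ n0 = cis s"
      using Complex.DeMoivre[of "s / n0" n0] \<open>n0 > 0\<close> by simp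
    ultimately show ?thesis using scaleC_power_commute[of f "cis (s / n0)" n0] arc by metis
  qed
  \<comment> \<open>reduce \<open>t\<close> to \<open>[0, 2\<pi>]\<close>\<close>
  define s where "s = Arg (cis t)"
  have "cis t = cis s" unfolding s_def by (simp add: cis_Arg)
  moreover have "cis s = cis (s + 2 * pi)" by (simp add: cis_mult[symmetric])
  moreover have "- pi < s" "s \<le> pi" using Arg_bounded unfolding s_def by auto
  ultimately show ?thesis
    using nonneg[of s] nonneg[of "s + 2 * pi"] by (cases "0 \<le> s") auto
qed

lemma scaleR_commute_if_cis_commute:
  fixes f :: "'a::complex_banach_algebra_1 \<Rightarrow> 'b::complex_banach_algebra_1"
  assumes add: "\<And>u v. f (u + v) = f u + f v"
    and cis: "\<And>t x. f (scaleC (cis t) x) = scaleC (cis t) (f x)"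
  shows "f (r *\<^sub>R x) = r *\<^sub>R f x"
proof -
  have small: "f (s *\<^sub>R w) = s *\<^sub>R f w" if "\<bar>s\<bar> \<le> 2" for s w
  proof -
    define t where "t = arccos (s / 2)"
    have two_cos: "complex_of_real s = cis t + cis (- t)"
      using that unfolding t_def by (simp add: complex_eq_iff)
    have "f (s *\<^sub>R w) = f (scaleC (cis t) w + scaleC (cis (- t)) w)"
      by (simp only: scaleC_of_real[symmetric] two_cos scaleC_add_left)
    also have "\<dots> = scaleC (cis t) (f w) + scaleC (cis (- t)) (f w)"
      by (simp only: add cis)
    also have "\<dots> = s *\<^sub>R f w"
      by (simp only: scaleC_of_real[symmetric] two_cos scaleC_add_left)
    finally show ?thesis .
  qed
  have nat: "f (of_nat k *\<^sub>R w) = of_nat k *\<^sub>R f w" for k w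
    using add[of 0 0] by (induction k) (simp_all add: add scaleR_add_left)
  obtain k :: nat where "\<bar>r\<bar> \<le> of_nat k" using real_arch_simple by blast
  then have "\<bar>r / of_nat (Suc k)\<bar> \<le> 2" by (simp add: divide_le_eq)
  then have "f (r *\<^sub>R x) = of_nat (Suc k) *\<^sub>R ((r / of_nat (Suc k)) *\<^sub>R f x)"
    using nat[of "Suc k" "(r / of_nat (Suc k)) *\<^sub>R x"] small by (simp del: of_nat_Suc)
  then show ?thesis by (simp del: of_nat_Suc)
qed

lemma scaleC_polar: "scaleC c x = scaleC (cis (Arg c)) (cmod c *\<^sub>R (x::'a::complex_banach_algebra_1))"
proof -
  have "c = cis (Arg c) * complex_of_real (cmod c)"
    using rcis_cmod_Arg[of c] by (simp add: rcis_def mult.commute)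
  then show ?thesis by (metis scaleC_scaleC scaleC_of_real)
qed

lemma scaleC_commute_if_circle_arc:
  fixes f :: "'a::complex_banach_algebra_1 \<Rightarrow> 'b::complex_banach_algebra_1"
  assumes add: "\<And>u v. f (u + v) = f u + f v"
    and "n0 > 0"
    and arc: "\<And>\<mu> x. \<mu> \<in> circle_arc n0 \<Longrightarrow> f (scaleC \<mu> x) = scaleC \<mu> (f x)"
  shows "f (scaleC c x) = scaleC c (f x)"
proof -
  note cis = cis_commute_if_circle_arc[OF \<open>n0 > 0\<close> arc]
  show ?thesis
    unfolding scaleC_polar[of c] by (simp add: cis scaleR_commute_if_cis_commute[OF add cis])
qed

theorem corollary3p4:
  fixes n0 :: nat and h :: "'a::complex_banach_algebra_1 \<Rightarrow> 'a"
    and \<theta> p q :: real and m :: int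
  assumes "n0 > 0"
    and "prime_algebra TYPE('a)"
    and "\<exists>e::'a. nontrivial_idempotent e"
    and "\<And>x. h (- x) = - h x"
    and "m \<noteq> 0" and "even m" and "p < 1" and "q < 1"
    and "\<And>x y. norm (h (x * y * x) - h x * y * x - x * h y * x - x * y * h x)
                 \<le> \<theta> * (norm x powr p + norm y powr q)"
    and "\<And>x y \<mu>. \<mu> \<in> circle_arc n0 \<Longrightarrow>
           norm (h (scaleC \<mu> (x + of_int m *\<^sub>R y)) + h (scaleC \<mu> (x - of_int m *\<^sub>R y))
                 - scaleC \<mu> (2 *\<^sub>R h x - (2 * of_int m ^ 2) *\<^sub>R h y
                               + (of_int m ^ 2) *\<^sub>R h (2 *\<^sub>R y)))
           \<le> \<theta> * (norm x powr p + norm y powr q)"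
  shows "linear_derivation h"
proof -
  have m: "real_of_int m \<noteq> 0" using \<open>m \<noteq> 0\<close> by simp
  have one: "1 \<in> circle_arc n0" unfolding circle_arc_def by force
  have quadratic: "norm (additive_quadratic_defect h m \<mu> x y) \<le> \<theta> * (norm x powr p + norm y powr q)"
    if "\<mu> \<in> circle_arc n0" for \<mu> x y
    using assms(10)[OF that] unfolding additive_quadratic_defect_def .
  have triple: "norm (jordan_triple_defect h x y) \<le> \<theta> * (norm x powr p + norm y powr q)" for x y
    using assms(9) unfolding jordan_triple_defect_def .
  note doubling_bound = doubling_bound_if_additive_quadratic_bound[OF assms(4) quadratic[OF one] m]
  have self: "dyadic_limit h = h"
    using dyadic_limit_eq_self[OF doubling_bound _ triple] assms(7,8) by fastforce
  have doubling: "h (2 *\<^sub>R y) = 2 *\<^sub>R h y" for y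
    using dyadic_limit_scaleR_2[OF doubling_bound \<open>q < 1\<close>] by (simp add: self)
  have add: "h (u + v) = h u + h v" for u v
    using additive_if_additive_quadratic_bound[OF doubling quadratic[OF one] m assms(7,8)] .
  have "jordan_triple_derivation h"
    using add dyadic_limit_jordan_triple[OF doubling_bound _ triple] assms(7,8)
    by unfold_locales (simp_all add: self)
  then have mult: "h (x * y) = h x * y + x * h y" for x y
    using jordan_triple_derivation.derivation_if_prime assms(2) by blast
  have "h (scaleC c x) = scaleC c (h x)" for c x
    using scaleC_commute_if_circle_arc[OF add \<open>n0 > 0\<close>]
      scaleC_commute_if_additive_quadratic_bound[OF doubling quadratic \<open>p < 1\<close>] by blast
  with add mult show ?thesis unfolding linear_derivation_def by blast
qed

end
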